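(* There are constants $c_0,c_1,c_2\geq 1$ such that the following holds. There is an infinite set $K$ of integers $k\geq c_0$ such that for each $k\in K$ there is a class $\mathcal{G}_k$ of graphs, each of treewidth at most $k$, such that for every $G\in\mathcal{G}_k$ and every $V\subseteq V(G)$ with $|V|\geq k^{c_1}$, the partial matching width of $V$ in $G$ is at least $(k\log|V|)/c_2$.
   Context: All graphs are finite and simple; $\log$ is the binary logarithm. Partial matching width: for a graph $G$ and $V\subseteq V(G)$, the partial matching width of $V$ (with respect to $G$) is the largest integer $k\geq 0$ such that for every ordering $(v_1,\dots,v_m)$ of the elements of $V$ there is an index $j\in\{0,\dots,m\}$ such that $G$ has a matching of size at least $k$ each of whose edges has one endpoint in the prefix set $\{v_1,\dots,v_j\}$ and the other endpoint in $V(G)\setminus\{v_1,\dots,v_j\}$. *)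

theory Defs
  imports Complex_Main
begin

type_synonym graph = "nat set \<times> nat set set"

definition verts :: "graph \<Rightarrow> nat set" where "verts G = fst G"
definition edges :: "graph \<Rightarrow> nat set set" where "edges G = snd G"

definition simple_graph :: "graph \<Rightarrow> bool" where
  "simple_graph G \<longleftrightarrow> finite (verts G) \<and> (\<forall>e\<in>edges G. e \<subseteq> verts G \<and> card e = 2)"

definition adj :: "graph \<Rightarrow> nat \<Rightarrow> nat \<Rightarrow> bool" where
  "adj G u v \<longleftrightarrow> {u, v} \<in> edges G"

definition connected_in :: "graph \<Rightarrow> nat set \<Rightarrow> bool" where
  "connected_in G S \<longleftrightarrow>
     (\<forall>u\<in>S. \<forall>v\<in>S. (\<lambda>x y. x \<in> S \<and> y \<in> S \<and> adj G x y)\<^sup>*\<^sup>* u v)"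

definition is_cycle :: "graph \<Rightarrow> nat list \<Rightarrow> bool" where
  "is_cycle G cs \<longleftrightarrow> length cs \<ge> 3 \<and> distinct cs \<and> set cs \<subseteq> verts G \<and>
     (\<forall>i < length cs - 1. adj G (cs ! i) (cs ! (i + 1))) \<and> adj G (last cs) (hd cs)"

definition is_tree :: "graph \<Rightarrow> bool" where
  "is_tree T \<longleftrightarrow> simple_graph T \<and> verts T \<noteq> {} \<and> connected_in T (verts T) \<and>
     (\<nexists>cs. is_cycle T cs)"

definition tree_decomposition :: "graph \<Rightarrow> graph \<Rightarrow> (nat \<Rightarrow> nat set) \<Rightarrow> bool" where
  "tree_decomposition G T bag \<longleftrightarrow> is_tree T \<and>
     (\<forall>t\<in>verts T. bag t \<subseteq> verts G) \<and>
     (\<forall>v\<in>verts G. \<exists>t\<in>verts T. v \<in> bag t) \<and>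
     (\<forall>e\<in>edges G. \<exists>t\<in>verts T. e \<subseteq> bag t) \<and>
     (\<forall>v\<in>verts G. connected_in T {t \<in> verts T. v \<in> bag t})"

definition decomposition_width :: "graph \<Rightarrow> (nat \<Rightarrow> nat set) \<Rightarrow> nat" where
  "decomposition_width T bag = Max ((\<lambda>t. card (bag t)) ` verts T) - 1"

definition treewidth :: "graph \<Rightarrow> nat" where
  "treewidth G = (LEAST w. \<exists>T bag. tree_decomposition G T bag \<and> decomposition_width T bag = w)"

definition crossing_matching :: "graph \<Rightarrow> nat set \<Rightarrow> nat set set \<Rightarrow> bool" where
  "crossing_matching G S M \<longleftrightarrow> M \<subseteq> edges G \<and>
     (\<forall>e1\<in>M. \<forall>e2\<in>M. e1 \<noteq> e2 \<longrightarrow> e1 \<inter> e2 = {}) \<and>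
     (\<forall>e\<in>M. \<exists>x y. e = {x, y} \<and> x \<in> S \<and> y \<in> verts G - S)"

definition pmw :: "graph \<Rightarrow> nat set \<Rightarrow> nat" where
  "pmw G V = (GREATEST k. \<forall>vs. distinct vs \<and> set vs = V \<longrightarrow>
      (\<exists>j \<le> length vs. \<exists>M. crossing_matching G (set (take j vs)) M \<and> card M \<ge> k))"

end

theory Submission
  imports Defs "HOL-Library.Infinite_Set"
begin

text \<open>The graphs are blow-ups of complete binary trees: each node \<open>x\<close> of the heap-ordered tree on
  \<open>{1..<N}\<close> becomes a blob of \<open>b\<close> vertices, and vertices are adjacent when their nodes are equal
  or adjacent. The bags \<open>blob t \<union> blob (parent t)\<close> show that the treewidth is below \<open>2 b\<close>.

  For the lower bound take \<open>m = |V|\<close> vertices in some order and \<open>H\<close> with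
  \<open>2 ^ (8 H) \<le> m < 2 ^ (8 H + 8)\<close>, so \<open>b < 2 ^ H\<close>. A node is heavy at time \<open>t\<close> if more than
  half of its blob lies among the first \<open>t\<close> vertices; then \<open>b / 2\<close> enumerated vertices of a heavy
  blob can be matched into a light neighbouring blob outside the prefix. If some subtree of height
  \<open>H\<close> consists of nodes that are heavy at the end, an induction on \<open>H\<close> finds one time at which
  every second level contributes such a heavy-light pair of blobs, giving about \<open>b H / 4\<close> edges.
  Otherwise either the light blobs hold a third of \<open>V\<close>, and after the last vertex each of them is
  matched inside itself, or the heavy nodes are so numerous that, containing no full subtree, they
  have at least \<open>H\<close> boundary nodes, each giving a heavy-light pair. In every case some prefix
  has a crossing matching of size \<open>b H / 24\<close>, which is at least \<open>2 b log m / 432\<close>.\<close>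

definition crossing_pairing :: "graph \<Rightarrow> nat set \<Rightarrow> nat set \<Rightarrow> (nat \<Rightarrow> nat) \<Rightarrow> bool" where
  "crossing_pairing G S A f \<longleftrightarrow> finite A \<and> A \<subseteq> S \<and> inj_on f A \<and>
     (\<forall>a\<in>A. f a \<in> verts G - S \<and> {a, f a} \<in> edges G)"

lemma crossing_pairing_matching:
  assumes "crossing_pairing G S A f"
  shows "crossing_matching G S ((\<lambda>a. {a, f a}) ` A)" and "card ((\<lambda>a. {a, f a}) ` A) = card A"
proof -
  have side: "a \<in> S" "f a \<notin> S" if "a \<in> A" for a
    using assms that unfolding crossing_pairing_def by auto
  show "crossing_matching G S ((\<lambda>a. {a, f a}) ` A)"
    unfolding crossing_matching_def
  proof (intro conjI ballI impI)
    show "(\<lambda>a. {a, f a}) ` A \<subseteq> edges G" using assms unfolding crossing_pairing_def by auto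
  next
    fix e1 e2 assume "e1 \<in> (\<lambda>a. {a, f a}) ` A" "e2 \<in> (\<lambda>a. {a, f a}) ` A" "e1 \<noteq> e2"
    then obtain x y where x: "x \<in> A" "e1 = {x, f x}" and y: "y \<in> A" "e2 = {y, f y}" and "x \<noteq> y"
      by auto
    moreover have "f x \<noteq> f y"
      using assms x y \<open>x \<noteq> y\<close> unfolding crossing_pairing_def inj_on_def by auto
    ultimately show "e1 \<inter> e2 = {}" using side by auto
  next
    fix e assume "e \<in> (\<lambda>a. {a, f a}) ` A"
    then show "\<exists>x y. e = {x, y} \<and> x \<in> S \<and> y \<in> verts G - S"
      using assms unfolding crossing_pairing_def by auto
  qed
  have "inj_on (\<lambda>a. {a, f a}) A"
    by (rule inj_onI) (metis doubleton_eq_iff side)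
  then show "card ((\<lambda>a. {a, f a}) ` A) = card A" by (rule card_image)
qed

lemma crossing_pairing_empty: "crossing_pairing G S {} f"
  unfolding crossing_pairing_def by auto

lemma crossing_pairing_Un:
  assumes "crossing_pairing G S A1 f1" "crossing_pairing G S A2 f2"
    and "A1 \<inter> A2 = {}" "f1 ` A1 \<inter> f2 ` A2 = {}"
  shows "crossing_pairing G S (A1 \<union> A2) (\<lambda>a. if a \<in> A1 then f1 a else f2 a)"
    and "card (A1 \<union> A2) = card A1 + card A2"
proof -
  have "inj_on f1 A1" "inj_on f2 A2" "finite A1" "finite A2"
    using assms(1,2) unfolding crossing_pairing_def by auto
  then have "inj_on (\<lambda>a. if a \<in> A1 then f1 a else f2 a) (A1 \<union> A2)"
    using assms(3,4) unfolding inj_on_def by (metis (full_types) IntI Un_iff empty_iff imageI)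
  then show "crossing_pairing G S (A1 \<union> A2) (\<lambda>a. if a \<in> A1 then f1 a else f2 a)"
    using assms(1,2) unfolding crossing_pairing_def by auto
  show "card (A1 \<union> A2) = card A1 + card A2"
    using \<open>finite A1\<close> \<open>finite A2\<close> assms(3) by (rule card_Un_disjoint)
qed

lemma finite_edges: "simple_graph G \<Longrightarrow> finite (edges G)"
  unfolding simple_graph_def by (meson Pow_iff finite_Pow_iff finite_subset subsetI)

lemma pmw_geI:
  assumes G: "simple_graph G" and V: "finite V"
    and pairing: "\<And>vs. distinct vs \<Longrightarrow> set vs = V \<Longrightarrow>
        \<exists>j \<le> length vs. \<exists>A f. crossing_pairing G (set (take j vs)) A f \<and> w \<le> card A"
  shows "w \<le> pmw G V"
  unfolding pmw_def
proof (rule Greatest_le_nat)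
  show "\<forall>vs. distinct vs \<and> set vs = V \<longrightarrow>
      (\<exists>j \<le> length vs. \<exists>M. crossing_matching G (set (take j vs)) M \<and> w \<le> card M)"
    using pairing crossing_pairing_matching by metis
next
  fix k
  assume "\<forall>vs. distinct vs \<and> set vs = V \<longrightarrow>
      (\<exists>j \<le> length vs. \<exists>M. crossing_matching G (set (take j vs)) M \<and> k \<le> card M)"
  moreover obtain vs where "distinct vs" "set vs = V" using V finite_distinct_list by blast
  ultimately obtain S M where "crossing_matching G S M" "k \<le> card M" by blast
  moreover have "card M \<le> card (edges G)"
    using \<open>crossing_matching G S M\<close> finite_edges[OF G]
    unfolding crossing_matching_def by (simp add: card_mono)
  ultimately show "k \<le> card (edges G)" by simp
qed

section \<open>The heap tree\<close>

definition heap_tree :: "nat \<Rightarrow> graph" where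
  "heap_tree N = ({1..<N}, {e. \<exists>z. 2 \<le> z \<and> z < N \<and> e = {z, z div 2}})"

lemma verts_heap_tree [simp]: "verts (heap_tree N) = {1..<N}"
  by (simp add: heap_tree_def verts_def)

lemma edges_heap_tree: "edges (heap_tree N) = {e. \<exists>z. 2 \<le> z \<and> z < N \<and> e = {z, z div 2}}"
  by (simp add: heap_tree_def edges_def)

lemma adj_heap_tree:
  "adj (heap_tree N) x y \<longleftrightarrow> (2 \<le> x \<and> x < N \<and> y = x div 2) \<or> (2 \<le> y \<and> y < N \<and> x = y div 2)"
  unfolding adj_def edges_heap_tree by (auto simp: doubleton_eq_iff)

lemma simple_graph_heap_tree: "simple_graph (heap_tree N)"
  unfolding simple_graph_def edges_heap_tree by auto

lemma connected_heap_tree: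
  assumes "2 \<le> N"
  shows "connected_in (heap_tree N) {1..<N}"
proof -
  let ?R = "\<lambda>x y. x \<in> {1..<N} \<and> y \<in> {1..<N} \<and> adj (heap_tree N) x y"
  have root: "?R\<^sup>*\<^sup>* x 1 \<and> ?R\<^sup>*\<^sup>* 1 x" if "x \<in> {1..<N}" for x
    using that
  proof (induction x rule: less_induct)
    case (less x)
    show ?case
    proof (cases "x = 1")
      case False
      then have "x div 2 \<in> {1..<N}" "x div 2 < x" and edge: "?R x (x div 2)" "?R (x div 2) x"
        using less.prems by (auto simp: adj_heap_tree)
      then have "?R\<^sup>*\<^sup>* (x div 2) 1" "?R\<^sup>*\<^sup>* 1 (x div 2)" using less.IH by blast+
      then show ?thesis
        using converse_rtranclp_into_rtranclp[OF edge(1) \<open>?R\<^sup>*\<^sup>* (x div 2) 1\<close>]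
          rtranclp.rtrancl_into_rtrancl[OF \<open>?R\<^sup>*\<^sup>* 1 (x div 2)\<close> edge(2)]
        by blast
    qed simp
  qed
  show ?thesis unfolding connected_in_def
    using root by (meson rtranclp_trans)
qed

lemma cycle_two_neighbours:
  assumes "is_cycle G cs" "v \<in> set cs"
  obtains x y where "x \<in> set cs" "y \<in> set cs" "x \<noteq> y" "{v, x} \<in> edges G" "{v, y} \<in> edges G"
proof -
  let ?n = "length cs"
  have n3: "3 \<le> ?n" and dist: "distinct cs" and wrap: "{last cs, hd cs} \<in> edges G"
    and step: "\<And>i. i < ?n - 1 \<Longrightarrow> {cs ! i, cs ! (i + 1)} \<in> edges G"
    using assms(1) unfolding is_cycle_def adj_def by auto
  have "cs \<noteq> []" using n3 by auto
  then have last_hd: "last cs = cs ! (?n - 1)" "hd cs = cs ! 0"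
    by (simp_all add: last_conv_nth hd_conv_nth)
  obtain p where p: "p < ?n" "cs ! p = v" using assms(2) by (auto simp: in_set_conv_nth)
  define i where "i = (if p = 0 then ?n - 1 else p - 1)"
  define j where "j = (if p = ?n - 1 then 0 else p + 1)"
  have ij: "i < ?n" "j < ?n" "i \<noteq> j" using p n3 unfolding i_def j_def by auto
  have "{cs ! i, v} \<in> edges G"
    using wrap step[of "p - 1"] p n3 unfolding i_def last_hd by (cases "p = 0") auto
  moreover have "{v, cs ! j} \<in> edges G"
    using wrap step[of p] p n3 unfolding j_def last_hd by (cases "p = ?n - 1") auto
  moreover have "cs ! i \<noteq> cs ! j" using dist ij by (simp add: nth_eq_iff_index_eq)
  ultimately show thesis using that[of "cs ! i" "cs ! j"] ij by (auto simp: insert_commute)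
qed

text \<open>Both cycle-neighbours of the largest vertex of a cycle are smaller than it, so both would be
  its parent.\<close>
lemma heap_tree_acyclic: "\<not> is_cycle (heap_tree N) cs"
proof
  assume cycle: "is_cycle (heap_tree N) cs"
  define m where "m = Max (set cs)"
  have "set cs \<noteq> {}" using cycle unfolding is_cycle_def by auto
  then have "m \<in> set cs" unfolding m_def by simp
  have parent: "z = m div 2" if z: "z \<in> set cs" and e: "{m, z} \<in> edges (heap_tree N)" for z
  proof -
    have "z \<le> m" using z unfolding m_def by simp
    moreover obtain w where "2 \<le> w" "{m, z} = {w, w div 2}"
      using e unfolding edges_heap_tree by auto
    ultimately show ?thesis by (auto simp: doubleton_eq_iff)
  qed
  obtain x y where "x \<in> set cs" "y \<in> set cs" "x \<noteq> y"
      "{m, x} \<in> edges (heap_tree N)" "{m, y} \<in> edges (heap_tree N)"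
    using cycle_two_neighbours[OF cycle \<open>m \<in> set cs\<close>] .
  then show False using parent by auto
qed

lemma is_tree_heap_tree: "2 \<le> N \<Longrightarrow> is_tree (heap_tree N)"
  unfolding is_tree_def
  using simple_graph_heap_tree connected_heap_tree heap_tree_acyclic by auto

section \<open>Blowing up the heap tree\<close>

definition heap_near :: "nat \<Rightarrow> nat \<Rightarrow> bool" where
  "heap_near x y \<longleftrightarrow> x = y \<or> x = y div 2 \<or> y = x div 2"

definition blob :: "nat \<Rightarrow> nat \<Rightarrow> nat set" where
  "blob b x = {v. v div b = x}"

definition blowup_verts :: "nat \<Rightarrow> nat \<Rightarrow> nat set" where
  "blowup_verts b N = {v. b \<le> v \<and> v < N * b}"

definition blowup_edges :: "nat \<Rightarrow> nat \<Rightarrow> nat set set" where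
  "blowup_edges b N = {{u, v} | u v. u \<in> blowup_verts b N \<and> v \<in> blowup_verts b N \<and> u \<noteq> v \<and>
     heap_near (u div b) (v div b)}"

definition blowup :: "nat \<Rightarrow> nat \<Rightarrow> graph" where
  "blowup b N = (blowup_verts b N, blowup_edges b N)"

lemma verts_blowup [simp]: "verts (blowup b N) = blowup_verts b N"
  by (simp add: blowup_def verts_def)

lemma edges_blowup [simp]: "edges (blowup b N) = blowup_edges b N"
  by (simp add: blowup_def edges_def)

lemma finite_blowup_verts [simp]: "finite (blowup_verts b N)"
  unfolding blowup_verts_def by (rule finite_subset[of _ "{..<N * b}"]) auto

lemma card_blowup_verts: "card (blowup_verts b N) = N * b - b"
proof -
  have "blowup_verts b N = {b..<N * b}" unfolding blowup_verts_def by auto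
  then show ?thesis by simp
qed

lemma simple_graph_blowup: "simple_graph (blowup b N)"
  unfolding simple_graph_def edges_blowup verts_blowup blowup_edges_def by auto

lemma blowup_edgeI:
  "u \<in> blowup_verts b N \<Longrightarrow> v \<in> blowup_verts b N \<Longrightarrow> u \<noteq> v \<Longrightarrow> heap_near (u div b) (v div b)
    \<Longrightarrow> {u, v} \<in> edges (blowup b N)"
  unfolding edges_blowup blowup_edges_def by blast

lemma blob_eq:
  assumes "0 < b"
  shows "blob b x = {x * b..<x * b + b}"
proof (intro set_eqI iffI)
  fix v assume "v \<in> blob b x"
  then have "v = x * b + v mod b" using div_mult_mod_eq[of v b] unfolding blob_def by simp
  moreover have "v mod b < b" using assms by simp
  ultimately show "v \<in> {x * b..<x * b + b}" by simp
next
  fix v assume "v \<in> {x * b..<x * b + b}"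
  then have "v div b = x" by (intro div_nat_eqI) (auto simp: mult.commute)
  then show "v \<in> blob b x" unfolding blob_def by simp
qed

lemma finite_blob [simp]: "0 < b \<Longrightarrow> finite (blob b x)"
  by (simp add: blob_eq)

lemma card_blob [simp]: "0 < b \<Longrightarrow> card (blob b x) = b"
  by (simp add: blob_eq)

lemma mem_blowup_verts_iff: "0 < b \<Longrightarrow> v \<in> blowup_verts b N \<longleftrightarrow> 1 \<le> v div b \<and> v div b < N"
  unfolding blowup_verts_def by (simp add: less_eq_div_iff_mult_less_eq div_less_iff_less_mult)

lemma blob_subset_blowup_verts: "0 < b \<Longrightarrow> 1 \<le> x \<Longrightarrow> x < N \<Longrightarrow> blob b x \<subseteq> blowup_verts b N"
  unfolding blob_def by (auto simp: mem_blowup_verts_iff)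

definition blowup_bag :: "nat \<Rightarrow> nat \<Rightarrow> nat \<Rightarrow> nat set" where
  "blowup_bag b N t = {v \<in> blowup_verts b N. v div b = t \<or> v div b = t div 2}"

lemma tree_decomposition_blowup:
  assumes b: "0 < b" and N: "2 \<le> N"
  shows "tree_decomposition (blowup b N) (heap_tree N) (blowup_bag b N)"
  unfolding tree_decomposition_def
proof (intro conjI ballI)
  show "is_tree (heap_tree N)" using is_tree_heap_tree[OF N] .
next
  fix t show "blowup_bag b N t \<subseteq> verts (blowup b N)" unfolding blowup_bag_def by auto
next
  fix v assume "v \<in> verts (blowup b N)"
  then show "\<exists>t\<in>verts (heap_tree N). v \<in> blowup_bag b N t"
    using b by (auto simp: blowup_bag_def mem_blowup_verts_iff)
next
  fix e assume "e \<in> edges (blowup b N)"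
  then obtain u v where e: "e = {u, v}" "u \<in> blowup_verts b N" "v \<in> blowup_verts b N"
      "heap_near (u div b) (v div b)"
    by (auto simp: blowup_edges_def)
  then have "e \<subseteq> blowup_bag b N (u div b) \<or> e \<subseteq> blowup_bag b N (v div b)"
    unfolding blowup_bag_def heap_near_def by auto
  then show "\<exists>t\<in>verts (heap_tree N). e \<subseteq> blowup_bag b N t"
    using e b by (auto simp: mem_blowup_verts_iff)
next
  fix v assume v: "v \<in> verts (blowup b N)"
  define x where "x = v div b"
  let ?T = "{t \<in> verts (heap_tree N). v \<in> blowup_bag b N t}"
  let ?R = "\<lambda>s t. s \<in> ?T \<and> t \<in> ?T \<and> adj (heap_tree N) s t"
  have T: "t \<in> ?T \<longleftrightarrow> t \<in> {1..<N} \<and> (t = x \<or> x = t div 2)" for t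
    using v unfolding blowup_bag_def x_def by auto
  have "x \<in> ?T" using v b T by (simp add: mem_blowup_verts_iff x_def)
  have "?R t x \<and> ?R x t" if "t \<in> ?T" "t \<noteq> x" for t
    using that \<open>x \<in> ?T\<close> T[of t] by (auto simp: adj_heap_tree)
  then have "?R\<^sup>*\<^sup>* t x \<and> ?R\<^sup>*\<^sup>* x t" if "t \<in> ?T" for t
    using that by (cases "t = x") auto
  then show "connected_in (heap_tree N) ?T"
    unfolding connected_in_def by (meson rtranclp_trans)
qed

lemma decomposition_width_blowup:
  assumes b: "0 < b" and N: "2 \<le> N"
  shows "decomposition_width (heap_tree N) (blowup_bag b N) \<le> 2 * b - 1"
proof -
  have "card (blowup_bag b N t) \<le> 2 * b" for t
  proof -
    have "blowup_bag b N t \<subseteq> blob b t \<union> blob b (t div 2)"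
      unfolding blowup_bag_def blob_def by auto
    then have "card (blowup_bag b N t) \<le> card (blob b t \<union> blob b (t div 2))"
      using b by (intro card_mono) auto
    also have "\<dots> \<le> card (blob b t) + card (blob b (t div 2))" by (rule card_Un_le)
    finally show ?thesis using b by simp
  qed
  then have "Max ((\<lambda>t. card (blowup_bag b N t)) ` verts (heap_tree N)) \<le> 2 * b"
    using N by auto
  then show ?thesis unfolding decomposition_width_def by simp
qed

lemma treewidth_blowup:
  assumes "0 < b" and "2 \<le> N"
  shows "treewidth (blowup b N) \<le> 2 * b - 1"
proof -
  have "treewidth (blowup b N) \<le> decomposition_width (heap_tree N) (blowup_bag b N)"
    unfolding treewidth_def using tree_decomposition_blowup[OF assms] by (intro Least_le) blast
  then show ?thesis using decomposition_width_blowup[OF assms] by simp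
qed

definition subtree :: "nat \<Rightarrow> nat \<Rightarrow> nat set" where
  "subtree H y = {z. \<exists>i\<le>H. z div 2 ^ i = y}"

lemma subtree_root: "y \<in> subtree H y"
  unfolding subtree_def by (auto intro: exI[of _ 0])

lemma double_in_subtree: "1 \<le> H \<Longrightarrow> 2 * y \<in> subtree H y"
  unfolding subtree_def by (auto intro: exI[of _ 1])

lemma subtree_bounds:
  assumes "1 \<le> y" "(y + 1) * 2 ^ H \<le> N" "z \<in> subtree H y"
  shows "1 \<le> z" "z < N"
proof -
  obtain i where i: "i \<le> H" "z div 2 ^ i = y" using assms(3) unfolding subtree_def by auto
  then show "1 \<le> z" using assms(1) by (cases "z = 0") auto
  have "z < (y + 1) * 2 ^ i" using i(2) div_less_iff_less_mult[of "2 ^ i" z "y + 1"] by simp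
  also have "\<dots> \<le> (y + 1) * 2 ^ H" using i(1) by (intro mult_le_mono2 power_increasing) auto
  finally show "z < N" using assms(2) by linarith
qed

lemma ancestor_level_unique:
  assumes "1 \<le> (y::nat)" "z div 2 ^ i = y" "z div 2 ^ j = y"
  shows "i = j"
proof -
  have False if "a < c" "z div 2 ^ a = y" "z div 2 ^ c = y" for a c
  proof -
    have "y div 2 ^ (c - a) = y" using that div_exp_eq[of z a "c - a"] by simp
    moreover have "y div 2 ^ (c - a) < y"
      using assms(1) that(1) by (intro div_less_dividend one_less_power) auto
    ultimately show False by simp
  qed
  then show ?thesis using assms(2,3) by (metis linorder_neqE_nat)
qed

lemma subtree_grandchild_subset:
  assumes "2 \<le> H" "c div 4 = y"
  shows "subtree (H - 2) c \<subseteq> subtree H y"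
proof
  fix z assume "z \<in> subtree (H - 2) c"
  then obtain i where "i \<le> H - 2" "z div 2 ^ i = c" unfolding subtree_def by auto
  then have "i + 2 \<le> H" "z div 2 ^ (i + 2) = y"
    using assms div_exp_eq[of z i 2] by auto
  then show "z \<in> subtree H y" unfolding subtree_def by blast
qed

lemma subtree_grandchild_unique:
  assumes "1 \<le> y" "c div 4 = y" "c' div 4 = y" "x \<in> subtree j c" "x \<in> subtree j' c'"
  shows "c = c'"
proof -
  obtain i i' where i: "x div 2 ^ i = c" and i': "x div 2 ^ i' = c'"
    using assms(4,5) unfolding subtree_def by auto
  have "x div 2 ^ (i + 2) = y" "x div 2 ^ (i' + 2) = y"
    using div_exp_eq[of x i 2] div_exp_eq[of x i' 2] i i' assms(2,3) by auto
  then have "i + 2 = i' + 2" by (rule ancestor_level_unique[OF assms(1)])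
  then show ?thesis using i i' by simp
qed

lemma grandchild_avoiding:
  assumes "1 \<le> y"
  obtains c where "c div 4 = y" "x1 \<notin> subtree j c" "x2 \<notin> subtree j c"
proof -
  let ?C = "{4 * y..4 * y + 3}"
  let ?B = "{c \<in> ?C. x1 \<in> subtree j c} \<union> {c \<in> ?C. x2 \<in> subtree j c}"
  have at_most_one: "card {c \<in> ?C. x \<in> subtree j c} \<le> 1" for x
    unfolding One_nat_def
    by (subst card_le_Suc0_iff_eq) (auto intro: subtree_grandchild_unique[OF assms])
  have "\<not> ?C \<subseteq> ?B"
  proof
    assume "?C \<subseteq> ?B"
    then have "card ?C \<le> card ?B" by (intro card_mono) auto
    also have "\<dots> \<le> 2" using card_Un_le[of "{c \<in> ?C. x1 \<in> subtree j c}" "{c \<in> ?C. x2 \<in> subtree j c}"]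
        at_most_one[of x1] at_most_one[of x2] by linarith
    finally show False by simp
  qed
  then obtain c where "c \<in> ?C" "x1 \<notin> subtree j c" "x2 \<notin> subtree j c" by blast
  moreover from \<open>c \<in> ?C\<close> have "c div 4 = y" by (intro div_nat_eqI) auto
  ultimately show thesis using that by blast
qed

text \<open>Outside the subtree of a grandchild \<open>c\<close> of \<open>y\<close>, the path from a node up to \<open>y\<close> never
  enters that subtree, because a node lies in it iff its ancestor two levels below \<open>y\<close> is \<open>c\<close>.\<close>
lemma path_outside_grandchild_subtree:
  assumes "1 \<le> y" "c div 4 = y" "2 \<le> H" "x \<in> subtree H y - subtree (H - 2) c"
  obtains i where "x div 2 ^ i = y" "\<And>l. l \<le> i \<Longrightarrow> x div 2 ^ l \<in> subtree H y - subtree (H - 2) c"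
proof -
  obtain i where i: "i \<le> H" "x div 2 ^ i = y" using assms(4) unfolding subtree_def by auto
  have "x div 2 ^ l \<in> subtree H y - subtree (H - 2) c" if "l \<le> i" for l
  proof
    have "x div 2 ^ l div 2 ^ (i - l) = y" using div_exp_eq[of x l "i - l"] i that by simp
    then show "x div 2 ^ l \<in> subtree H y"
      unfolding subtree_def using i(1) by (intro CollectI exI[of _ "i - l"]) auto
    show "x div 2 ^ l \<notin> subtree (H - 2) c"
    proof
      assume "x div 2 ^ l \<in> subtree (H - 2) c"
      then obtain k where k: "k \<le> H - 2" "x div 2 ^ (l + k) = c"
        unfolding subtree_def by (auto simp: div_exp_eq)
      then have "x div 2 ^ (l + k + 2) = y" using div_exp_eq[of x "l + k" 2] assms(2) by simp
      then have "l + k + 2 = i" using ancestor_level_unique[OF assms(1) _ i(2)] by blast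
      then have "x \<in> subtree (H - 2) c"
        using k i(1) unfolding subtree_def by (intro CollectI exI[of _ "l + k"]) auto
      then show False using assms(4) by simp
    qed
  qed
  then show thesis using that i(2) by blast
qed

lemma ancestor_path_change:
  fixes x :: nat
  assumes "P x \<noteq> P (x div 2 ^ i)"
  shows "\<exists>l<i. P (x div 2 ^ l) \<noteq> P (x div 2 ^ l div 2)"
  using assms
proof (induction i)
  case (Suc i)
  show ?case
  proof (cases "P (x div 2 ^ i) = P (x div 2 ^ i div 2)")
    case True
    then have "P x \<noteq> P (x div 2 ^ i)" using Suc.prems div_exp_eq[of x i 1] by simp
    then show ?thesis using Suc.IH less_SucI by blast
  qed (use lessI in blast)
qed simp

section \<open>Heavy blobs and pairings between blobs\<close>

definition heavy :: "nat \<Rightarrow> nat list \<Rightarrow> nat \<Rightarrow> nat \<Rightarrow> bool" where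
  "heavy b vs t x \<longleftrightarrow> b < 2 * card (blob b x \<inter> set (take t vs))"

definition mixed :: "nat \<Rightarrow> nat list \<Rightarrow> nat \<Rightarrow> nat set \<Rightarrow> bool" where
  "mixed b vs t X \<longleftrightarrow> (\<exists>x\<in>X. heavy b vs t x) \<and> (\<exists>x\<in>X. \<not> heavy b vs t x)"

definition blobs :: "nat \<Rightarrow> nat set \<Rightarrow> nat set" where
  "blobs b X = {v. v div b \<in> X}"

lemma blobs_mono: "X \<subseteq> Y \<Longrightarrow> blobs b X \<subseteq> blobs b Y"
  unfolding blobs_def by auto

lemma blobs_disjoint: "X \<inter> Y = {} \<Longrightarrow> blobs b X \<inter> blobs b Y = {}"
  unfolding blobs_def by auto

lemma crossing_pairing_Un_blobs:
  assumes A: "crossing_pairing G S A f" "A \<union> f ` A \<subseteq> blobs b Y"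
    and T: "crossing_pairing G S T g" "T \<union> g ` T \<subseteq> blobs b Z" and "Y \<inter> Z = {}"
  obtains h where "crossing_pairing G S (A \<union> T) h" "card (A \<union> T) = card A + card T"
    "A \<union> T \<union> h ` (A \<union> T) \<subseteq> blobs b (Y \<union> Z)"
proof -
  have "blobs b Y \<inter> blobs b Z = {}" using blobs_disjoint[OF \<open>Y \<inter> Z = {}\<close>] .
  then have disjoint: "A \<inter> T = {}" "f ` A \<inter> g ` T = {}" using A(2) T(2) by blast+
  have "A \<union> T \<union> (\<lambda>a. if a \<in> A then f a else g a) ` (A \<union> T) \<subseteq> blobs b Y \<union> blobs b Z"
    using A(2) T(2) by auto
  also have "\<dots> \<subseteq> blobs b (Y \<union> Z)" by (auto intro: blobs_mono[THEN subsetD])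
  finally show thesis using crossing_pairing_Un[OF A(1) T(1) disjoint] that by blast
qed
lemma heavy_mono: "t \<le> t' \<Longrightarrow> heavy b vs t x \<Longrightarrow> heavy b vs t' x"
  unfolding heavy_def
  using card_mono[of "blob b x \<inter> set (take t' vs)" "blob b x \<inter> set (take t vs)"]
    set_take_subset_set_take[of t t' vs] by fastforce

lemma not_heavy_0: "\<not> heavy b vs 0 x"
  unfolding heavy_def by simp

lemma heavy_Suc_other:
  assumes "t < length vs" "vs ! t div b \<noteq> x"
  shows "heavy b vs (Suc t) x \<longleftrightarrow> heavy b vs t x"
proof -
  have "set (take (Suc t) vs) = insert (vs ! t) (set (take t vs))"
    using assms(1) by (simp add: take_Suc_conv_app_nth)
  moreover have "vs ! t \<notin> blob b x" using assms(2) unfolding blob_def by simp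
  ultimately show ?thesis unfolding heavy_def by simp
qed

lemma mixed_subset: "mixed b vs t Y \<Longrightarrow> Y \<subseteq> X \<Longrightarrow> mixed b vs t X"
  unfolding mixed_def by blast

text \<open>At the first moment some node becomes heavy, only the blob of the last enumerated vertex
  has changed, so every other node is still light.\<close>
lemma mixed_time_exists:
  assumes "x1 \<in> X" "x2 \<in> X" "x1 \<noteq> x2" "\<forall>x\<in>X. heavy b vs (length vs) x"
  shows "\<exists>t\<le>length vs. mixed b vs t X"
proof -
  define t1 where "t1 = (LEAST t. \<exists>x\<in>X. heavy b vs t x)"
  have ex: "\<exists>x\<in>X. heavy b vs (length vs) x" using assms(1,4) by blast
  have heavy_t1: "\<exists>x\<in>X. heavy b vs t1 x" unfolding t1_def by (rule LeastI_ex) (use ex in blast)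
  have "t1 \<le> length vs" unfolding t1_def by (rule Least_le) (use ex in blast)
  have "0 < t1" using heavy_t1 not_heavy_0 by (cases t1) auto
  have light_before: "\<not> heavy b vs (t1 - 1) x" if "x \<in> X" for x
    using not_less_Least[of "t1 - 1" "\<lambda>t. \<exists>x\<in>X. heavy b vs t x"] that \<open>0 < t1\<close>
    unfolding t1_def[symmetric] by auto
  obtain x where "x \<in> X" "vs ! (t1 - 1) div b \<noteq> x" using assms(1-3) by metis
  then have "\<not> heavy b vs t1 x"
    using heavy_Suc_other[of "t1 - 1" vs b x] light_before \<open>t1 \<le> length vs\<close> \<open>0 < t1\<close> by simp
  then have "mixed b vs t1 X" using heavy_t1 \<open>x \<in> X\<close> unfolding mixed_def by blast
  then show ?thesis using \<open>t1 \<le> length vs\<close> by blast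
qed

text \<open>\<open>x1\<close> is the first node of \<open>X\<close> to become heavy, \<open>x2\<close> the last.\<close>
lemma first_last_heavy:
  assumes "X \<noteq> {}" "\<forall>x\<in>X. heavy b vs (length vs) x"
  obtains x1 x2 where "x1 \<in> X" "x2 \<in> X"
    "\<And>t. mixed b vs t X \<Longrightarrow> heavy b vs t x1 \<and> \<not> heavy b vs t x2"
proof -
  define t1 where "t1 = (LEAST t. \<exists>x\<in>X. heavy b vs t x)"
  define t2 where "t2 = (LEAST t. \<forall>x\<in>X. heavy b vs t x)"
  have "\<exists>x\<in>X. heavy b vs t1 x" unfolding t1_def by (rule LeastI_ex) (use assms in blast)
  then obtain x1 where x1: "x1 \<in> X" "heavy b vs t1 x1" by blast
  have t2: "\<forall>x\<in>X. heavy b vs t2 x" unfolding t2_def by (rule LeastI_ex) (use assms in blast)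
  then have "0 < t2" using assms(1) not_heavy_0 by (cases t2) auto
  then have "\<not> (\<forall>x\<in>X. heavy b vs (t2 - 1) x)"
    using not_less_Least[of "t2 - 1" "\<lambda>t. \<forall>x\<in>X. heavy b vs t x"] unfolding t2_def[symmetric] by auto
  then obtain x2 where x2: "x2 \<in> X" "\<not> heavy b vs (t2 - 1) x2" by blast
  have "heavy b vs t x1 \<and> \<not> heavy b vs t x2" if "mixed b vs t X" for t
  proof
    have "t1 \<le> t" unfolding t1_def by (rule Least_le) (use that in \<open>auto simp: mixed_def\<close>)
    then show "heavy b vs t x1" using heavy_mono x1(2) by blast
    have "t < t2" using that t2 heavy_mono[of t2 t] unfolding mixed_def by (meson not_less)
    then show "\<not> heavy b vs t x2" using heavy_mono[of t "t2 - 1"] x2(2) by auto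
  qed
  then show thesis using that x1(1) x2(1) by blast
qed

lemma card_eq_sum_blob_Int:
  assumes b: "0 < b" and V: "V \<subseteq> blowup_verts b N"
  shows "card V = (\<Sum>x\<in>{1..<N}. card (blob b x \<inter> V))"
proof -
  have "V = (\<Union>x\<in>{1..<N}. blob b x \<inter> V)"
    using V by (auto simp: blob_def mem_blowup_verts_iff[OF b])
  moreover have "card (\<Union>x\<in>{1..<N}. blob b x \<inter> V) = (\<Sum>x\<in>{1..<N}. card (blob b x \<inter> V))"
  proof (rule card_UN_disjoint)
    show "\<forall>x\<in>{1..<N}. finite (blob b x \<inter> V)" using b by simp
  qed (auto simp: blob_def)
  ultimately show ?thesis by simp
qed

lemma blob_pairing:
  assumes b: "0 < b" and Q: "finite Q" "inj_on g Q"
    and near: "\<And>u. u \<in> Q \<Longrightarrow> heap_near u (g u) \<and> 1 \<le> u \<and> u < N \<and> 1 \<le> g u \<and> g u < N"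
    and A: "\<And>u. u \<in> Q \<Longrightarrow> A u \<subseteq> blob b u \<inter> S"
    and room: "\<And>u. u \<in> Q \<Longrightarrow> card (A u) \<le> card (blob b (g u) - S)"
  shows "\<exists>f. crossing_pairing (blowup b N) S (\<Union>u\<in>Q. A u) f
    \<and> card (\<Union>u\<in>Q. A u) = (\<Sum>u\<in>Q. card (A u)) \<and> f ` (\<Union>u\<in>Q. A u) \<subseteq> blobs b (g ` Q)"
proof -
  have finA: "finite (A u)" if "u \<in> Q" for u
    using A[OF that] b by (meson finite_blob finite_Int finite_subset)
  have "\<exists>h. inj_on h (A u) \<and> h ` A u \<subseteq> blob b (g u) - S" if "u \<in> Q" for u
    using card_le_inj[OF finA[OF that] _ room[OF that]] b by auto
  then obtain h where h: "\<And>u. u \<in> Q \<Longrightarrow> inj_on (h u) (A u) \<and> h u ` A u \<subseteq> blob b (g u) - S"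
    by metis
  define f where "f a = h (a div b) a" for a
  have node: "a div b = u" if "a \<in> A u" "u \<in> Q" for a u
    using A[OF that(2)] that(1) unfolding blob_def by auto
  have fA: "f a \<in> blob b (g u) - S" if "a \<in> A u" "u \<in> Q" for a u
    using h[OF that(2)] node[OF that] that unfolding f_def by auto
  have "crossing_pairing (blowup b N) S (\<Union>u\<in>Q. A u) f"
    unfolding crossing_pairing_def
  proof (intro conjI ballI)
    show "finite (\<Union>u\<in>Q. A u)" using Q finA by auto
    show "(\<Union>u\<in>Q. A u) \<subseteq> S" using A by auto
    show "inj_on f (\<Union>u\<in>Q. A u)"
    proof (rule inj_onI)
      fix x y assume "x \<in> (\<Union>u\<in>Q. A u)" "y \<in> (\<Union>u\<in>Q. A u)" "f x = f y"
      then obtain u v where u: "u \<in> Q" "x \<in> A u" and v: "v \<in> Q" "y \<in> A v" by auto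
      have "g u = g v" using fA[OF u(2,1)] fA[OF v(2,1)] \<open>f x = f y\<close> unfolding blob_def by auto
      then have "u = v" using Q(2) u v unfolding inj_on_def by auto
      then show "x = y" using h[OF u(1)] u v \<open>f x = f y\<close> node[OF u(2,1)] node[OF v(2,1)]
        unfolding f_def inj_on_def by auto
    qed
  next
    fix a assume "a \<in> (\<Union>u\<in>Q. A u)"
    then obtain u where u: "u \<in> Q" "a \<in> A u" by auto
    have fa: "f a \<in> blob b (g u)" "f a \<notin> S" using fA[OF u(2,1)] by auto
    have a: "a \<in> blob b u" "a \<in> S" using A[OF u(1)] u by auto
    have "f a \<in> blowup_verts b N" "a \<in> blowup_verts b N"
      using blob_subset_blowup_verts[OF b] near[OF u(1)] fa(1) a(1) by auto
    moreover have "heap_near (a div b) (f a div b)" using a fa near[OF u(1)] unfolding blob_def by auto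
    moreover have "a \<noteq> f a" using a fa by auto
    ultimately show "f a \<in> verts (blowup b N) - S" "{a, f a} \<in> edges (blowup b N)"
      using fa blowup_edgeI by auto
  qed
  moreover have "card (\<Union>u\<in>Q. A u) = (\<Sum>u\<in>Q. card (A u))"
    using Q finA node by (intro card_UN_disjoint) blast+
  moreover have "f ` (\<Union>u\<in>Q. A u) \<subseteq> blobs b (g ` Q)"
    using fA node unfolding blobs_def blob_def by fastforce
  ultimately show ?thesis by blast
qed

lemma light_blobs_pairing:
  assumes b: "0 < b" and Q: "finite Q"
    and light: "\<And>u. u \<in> Q \<Longrightarrow> 1 \<le> u \<and> u < N \<and> 2 * card (blob b u \<inter> S) \<le> b"
  shows "\<exists>A f. crossing_pairing (blowup b N) S A f \<and> card A = (\<Sum>u\<in>Q. card (blob b u \<inter> S))"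
proof -
  have "card (blob b u \<inter> S) \<le> card (blob b (id u) - S)" if "u \<in> Q" for u
  proof -
    have "card (blob b u - S) = b - card (blob b u \<inter> S)"
      using b by (simp add: card_Diff_subset_Int)
    then show ?thesis using light[OF that] unfolding id_def by linarith
  qed
  then show ?thesis
    using blob_pairing[OF b Q inj_on_id, of N "\<lambda>u. blob b u \<inter> S" S] light
    by (auto simp: heap_near_def)
qed

lemma heavy_light_pairing:
  assumes b: "0 < b" and Q: "finite Q" "inj_on g Q"
    and heavy: "\<And>u. u \<in> Q \<Longrightarrow> 1 \<le> u \<and> u < N \<and> b < 2 * card (blob b u \<inter> S)"
    and light: "\<And>u. u \<in> Q \<Longrightarrow> heap_near u (g u) \<and> 1 \<le> g u \<and> g u < N \<and> 2 * card (blob b (g u) \<inter> S) \<le> b"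
  shows "\<exists>A f. crossing_pairing (blowup b N) S A f \<and> card A = card Q * (b div 2)
    \<and> A \<subseteq> blobs b Q \<and> f ` A \<subseteq> blobs b (g ` Q)"
proof -
  have "\<exists>T. T \<subseteq> blob b u \<inter> S \<and> card T = b div 2" if "u \<in> Q" for u
  proof -
    have "b div 2 \<le> card (blob b u \<inter> S)" using heavy[OF that] by linarith
    then show ?thesis by (meson obtain_subset_with_card_n)
  qed
  then obtain T where T: "\<And>u. u \<in> Q \<Longrightarrow> T u \<subseteq> blob b u \<inter> S \<and> card (T u) = b div 2" by metis
  have "card (T u) \<le> card (blob b (g u) - S)" if "u \<in> Q" for u
  proof -
    have "card (blob b (g u) - S) = b - card (blob b (g u) \<inter> S)"
      using b by (simp add: card_Diff_subset_Int)
    then show ?thesis using T[OF that] light[OF that] by linarith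
  qed
  then obtain f where "crossing_pairing (blowup b N) S (\<Union>u\<in>Q. T u) f"
      "card (\<Union>u\<in>Q. T u) = (\<Sum>u\<in>Q. card (T u))" "f ` (\<Union>u\<in>Q. T u) \<subseteq> blobs b (g ` Q)"
    using blob_pairing[OF b Q, of N T S] heavy light T by blast
  moreover have "(\<Sum>u\<in>Q. card (T u)) = card Q * (b div 2)" using T by simp
  moreover have "(\<Union>u\<in>Q. T u) \<subseteq> blobs b Q" using T unfolding blobs_def blob_def by auto
  ultimately show ?thesis by auto
qed

section \<open>A subtree of heavy nodes\<close>

lemma grandchild_subtree_fits:
  fixes c y H :: nat
  assumes "c div 4 = y" "2 \<le> H"
  shows "(c + 1) * 2 ^ (H - 2) \<le> (y + 1) * 2 ^ H"
proof -
  have "(c + 1) * 2 ^ (H - 2) \<le> (4 * (y + 1)) * 2 ^ (H - 2)"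
    using assms(1) div_less_iff_less_mult[of 4 c "y + 1"] by (intro mult_le_mono1) simp
  also have "\<dots> = (y + 1) * 2 ^ H"
  proof -
    obtain k where "H = k + 2" using assms(2) by (metis le_add_diff_inverse2)
    then show ?thesis by (simp add: power_add algebra_simps)
  qed
  finally show ?thesis .
qed

text \<open>The value of \<open>P\<close> changes on the way from \<open>x1\<close> or from \<open>x2\<close> up to \<open>y\<close>, and these paths
  avoid the subtree of \<open>c\<close>.\<close>
lemma parent_change_outside_grandchild_subtree:
  assumes "1 \<le> y" "c div 4 = y" "2 \<le> H"
    and "x1 \<in> subtree H y - subtree (H - 2) c" "x2 \<in> subtree H y - subtree (H - 2) c"
    and "P x1" "\<not> P x2"
  obtains z where "z \<in> subtree H y - subtree (H - 2) c" "z div 2 \<in> subtree H y - subtree (H - 2) c"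
    "P z \<noteq> P (z div 2)"
proof -
  have "\<exists>z. z \<in> subtree H y - subtree (H - 2) c \<and> z div 2 \<in> subtree H y - subtree (H - 2) c
      \<and> P z \<noteq> P (z div 2)"
    if x: "x \<in> subtree H y - subtree (H - 2) c" and change: "P x \<noteq> P y" for x
  proof -
    obtain i where i: "x div 2 ^ i = y"
      and path: "\<And>l. l \<le> i \<Longrightarrow> x div 2 ^ l \<in> subtree H y - subtree (H - 2) c"
      using path_outside_grandchild_subtree[OF assms(1-3) x] by blast
    obtain l where "l < i" "P (x div 2 ^ l) \<noteq> P (x div 2 ^ l div 2)"
      using ancestor_path_change[of P x i] change i by blast
    moreover have "x div 2 ^ l div 2 = x div 2 ^ Suc l" using div_exp_eq[of x l 1] by simp
    ultimately show ?thesis using path[of l] path[of "Suc l"] by (intro exI[of _ "x div 2 ^ l"]) auto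
  qed
  then show thesis using assms(4-7) that by (cases "P y") blast+
qed

lemma heavy_light_pairing_outside_grandchild:
  assumes b: "2 \<le> b" and y: "1 \<le> y" "(y + 1) * 2 ^ H \<le> N" and c: "c div 4 = y" and H: "2 \<le> H"
    and x: "x1 \<in> subtree H y - subtree (H - 2) c" "x2 \<in> subtree H y - subtree (H - 2) c"
    and heavy: "heavy b vs t x1" "\<not> heavy b vs t x2"
  obtains T g where "crossing_pairing (blowup b N) (set (take t vs)) T g" "card T = b div 2"
    "T \<union> g ` T \<subseteq> blobs b (subtree H y - subtree (H - 2) c)"
proof -
  let ?R = "subtree H y - subtree (H - 2) c"
  obtain z where z: "z \<in> ?R" "z div 2 \<in> ?R" and change: "heavy b vs t z \<noteq> heavy b vs t (z div 2)"
    using parent_change_outside_grandchild_subtree[OF y(1) c H x heavy] by blast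
  obtain zh zl where zhl: "{zh, zl} = {z, z div 2}" "heavy b vs t zh" "\<not> heavy b vs t zl"
    using change by (metis insert_commute)
  then have "heap_near zh zl" "zh \<in> ?R" "zl \<in> ?R"
    using z by (auto simp: heap_near_def doubleton_eq_iff)
  moreover have "1 \<le> zh" "zh < N" "1 \<le> zl" "zl < N"
    using subtree_bounds[OF y] calculation(2,3) by auto
  ultimately obtain T g where T: "crossing_pairing (blowup b N) (set (take t vs)) T g"
      "card T = b div 2" "T \<subseteq> blobs b {zh}" "g ` T \<subseteq> blobs b {zl}"
    using heavy_light_pairing[of b "{zh}" "\<lambda>_. zl" N "set (take t vs)"] b zhl
    unfolding heavy_def by auto
  have "blobs b {zh} \<subseteq> blobs b ?R" "blobs b {zl} \<subseteq> blobs b ?R"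
    using \<open>zh \<in> ?R\<close> \<open>zl \<in> ?R\<close> by (simp_all add: blobs_mono)
  then have "T \<union> g ` T \<subseteq> blobs b ?R" using T(3,4) by (meson Un_least order_trans)
  then show thesis using that T(1,2) by blast
qed

lemma subtree_pairing:
  assumes b: "2 \<le> b"
  shows "1 \<le> H \<Longrightarrow> 1 \<le> y \<Longrightarrow> (y + 1) * 2 ^ H \<le> N \<Longrightarrow>
    \<forall>z\<in>subtree H y. heavy b vs (length vs) z \<Longrightarrow>
    \<exists>t\<le>length vs. \<exists>A f. crossing_pairing (blowup b N) (set (take t vs)) A f
      \<and> (b div 2) * ((H - 1) div 2) \<le> card A \<and> A \<union> f ` A \<subseteq> blobs b (subtree H y)
      \<and> mixed b vs t (subtree H y)"
proof (induction H arbitrary: y rule: less_induct)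
  case (less H)
  let ?X = "subtree H y"
  show ?case
  proof (cases "H \<le> 2")
    case True
    have "y \<noteq> 2 * y" using less.prems(2) by simp
    then obtain t where "t \<le> length vs" "mixed b vs t ?X"
      using mixed_time_exists[OF subtree_root double_in_subtree[OF less.prems(1)]] less.prems(4)
      by blast
    moreover have "(H - 1) div 2 = 0" using True by auto
    ultimately show ?thesis
      using crossing_pairing_empty[of "blowup b N" "set (take t vs)" id] by auto
  next
    case False
    obtain x1 x2 where x: "x1 \<in> ?X" "x2 \<in> ?X"
      and x_heavy: "\<And>t. mixed b vs t ?X \<Longrightarrow> heavy b vs t x1 \<and> \<not> heavy b vs t x2"
      using first_last_heavy[of ?X b vs] less.prems(4) subtree_root by blast
    obtain c where c: "c div 4 = y" "x1 \<notin> subtree (H - 2) c" "x2 \<notin> subtree (H - 2) c"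
      using grandchild_avoiding[OF less.prems(2)] by blast
    let ?Y = "subtree (H - 2) c"
    have "?Y \<subseteq> ?X" using subtree_grandchild_subset[OF _ c(1)] False by simp
    have "1 \<le> c" using c(1) less.prems(2) by auto
    moreover have "(c + 1) * 2 ^ (H - 2) \<le> N"
      using grandchild_subtree_fits[OF c(1), of H] False less.prems(3) by simp
    moreover have "H - 2 < H" "1 \<le> H - 2" using False by auto
    moreover have "\<forall>z\<in>?Y. heavy b vs (length vs) z" using less.prems(4) \<open>?Y \<subseteq> ?X\<close> by blast
    ultimately have "\<exists>t\<le>length vs. \<exists>A f. crossing_pairing (blowup b N) (set (take t vs)) A f
      \<and> (b div 2) * ((H - 2 - 1) div 2) \<le> card A \<and> A \<union> f ` A \<subseteq> blobs b ?Y
      \<and> mixed b vs t ?Y"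
      using less.IH[of "H - 2" c] by simp
    then obtain t A f where t: "t \<le> length vs"
      and A: "crossing_pairing (blowup b N) (set (take t vs)) A f"
        "(b div 2) * ((H - 2 - 1) div 2) \<le> card A" "A \<union> f ` A \<subseteq> blobs b ?Y"
      and mixed: "mixed b vs t ?Y"
      by blast
    then have "mixed b vs t ?X" using mixed_subset \<open>?Y \<subseteq> ?X\<close> by blast
    then have "heavy b vs t x1" "\<not> heavy b vs t x2" using x_heavy by auto
    moreover have "2 \<le> H" "x1 \<in> ?X - ?Y" "x2 \<in> ?X - ?Y" using False x c by auto
    ultimately obtain T g where T: "crossing_pairing (blowup b N) (set (take t vs)) T g"
        "card T = b div 2" "T \<union> g ` T \<subseteq> blobs b (?X - ?Y)"
      using heavy_light_pairing_outside_grandchild[OF b less.prems(2,3) c(1)] by blast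
    have "?Y \<inter> (?X - ?Y) = {}" by blast
    then obtain h where U: "crossing_pairing (blowup b N) (set (take t vs)) (A \<union> T) h"
        "card (A \<union> T) = card A + card T" "A \<union> T \<union> h ` (A \<union> T) \<subseteq> blobs b (?Y \<union> (?X - ?Y))"
      using crossing_pairing_Un_blobs[OF A(1,3) T(1,3)] by blast
    have "(H - 1) div 2 = Suc ((H - 2 - 1) div 2)" using False by presburger
    then have "(b div 2) * ((H - 1) div 2) = (b div 2) * ((H - 2 - 1) div 2) + b div 2" by simp
    then have "(b div 2) * ((H - 1) div 2) \<le> card (A \<union> T)" using U(2) A(2) T(2) by linarith
    moreover have "?Y \<union> (?X - ?Y) = ?X" using \<open>?Y \<subseteq> ?X\<close> by blast
    then have "A \<union> T \<union> h ` (A \<union> T) \<subseteq> blobs b ?X" using U(3) by simp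
    ultimately show ?thesis using U(1) t \<open>mixed b vs t ?X\<close> by blast
  qed
qed

section \<open>Counting a set of tree nodes by its boundary\<close>

definition boundary :: "nat \<Rightarrow> nat set \<Rightarrow> nat set" where
  "boundary N D = {u \<in> D. (2 \<le> u \<and> u div 2 \<notin> D) \<or> (2 * u < N \<and> 2 * u \<notin> D)
     \<or> (2 * u + 1 < N \<and> 2 * u + 1 \<notin> D)}"

definition near :: "nat \<Rightarrow> nat \<Rightarrow> nat set" where
  "near H u = {z. \<exists>i\<le>H. \<exists>j\<le>H. z div 2 ^ j = u div 2 ^ i}"

lemma nearI: "i \<le> H \<Longrightarrow> j \<le> H \<Longrightarrow> z div 2 ^ j = u div 2 ^ i \<Longrightarrow> z \<in> near H u"
  unfolding near_def by blast

lemma boundary_subset: "boundary N D \<subseteq> D"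
  unfolding boundary_def by auto

lemma boundary_of_parent_change:
  assumes "2 \<le> c" "c < N" "(c \<in> D) \<noteq> (c div 2 \<in> D)"
  shows "c \<in> boundary N D \<or> c div 2 \<in> boundary N D"
proof -
  obtain u where u: "u = c div 2" by simp
  then have "c = 2 * u \<or> c = 2 * u + 1" by auto
  then show ?thesis using assms unfolding boundary_def u[symmetric] by auto
qed

lemma finite_card_near: "finite (near H u)" "card (near H u) \<le> (H + 1) * (H + 1) * 2 ^ H"
proof -
  let ?F = "\<lambda>(i, j, r). (u div 2 ^ i) * 2 ^ j + r"
  let ?I = "{..H} \<times> {..H} \<times> {..<(2::nat) ^ H}"
  have sub: "near H u \<subseteq> ?F ` ?I"
  proof
    fix z assume "z \<in> near H u"
    then obtain i j where ij: "i \<le> H" "j \<le> H" "z div 2 ^ j = u div 2 ^ i" unfolding near_def by auto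
    have "z = ?F (i, j, z mod 2 ^ j)" using ij(3) div_mult_mod_eq[of z "2 ^ j"] by simp
    moreover have "z mod 2 ^ j < 2 ^ H"
    proof -
      have "(2::nat) ^ j \<le> 2 ^ H" using ij(2) by (rule power_increasing) simp
      moreover have "z mod 2 ^ j < 2 ^ j" by simp
      ultimately show ?thesis by linarith
    qed
    ultimately show "z \<in> ?F ` ?I" using ij by (intro image_eqI[of _ _ "(i, j, z mod 2 ^ j)"]) auto
  qed
  have fin: "finite (?F ` ?I)" by simp
  show "finite (near H u)" using finite_subset[OF sub fin] .
  have "card (near H u) \<le> card (?F ` ?I)" using card_mono[OF fin sub] .
  also have "\<dots> \<le> card ?I" by (rule card_image_le) simp
  also have "card ?I = (H + 1) * (H + 1) * 2 ^ H" by (simp add: card_cartesian_product algebra_simps)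
  finally show "card (near H u) \<le> (H + 1) * (H + 1) * 2 ^ H" .
qed

lemma ancestor_subtree_fits:
  assumes "z < 2 ^ n" "2 ^ H \<le> z"
  shows "(z div 2 ^ H + 1) * 2 ^ H \<le> (2::nat) ^ n"
proof -
  have "(2::nat) ^ H < 2 ^ n" using assms by linarith
  then have "H < n" by simp
  then have n: "2 ^ n = 2 ^ (n - H) * (2::nat) ^ H" by (simp flip: power_add)
  then have "z div 2 ^ H < 2 ^ (n - H)" using assms(1) by (simp add: div_less_iff_less_mult)
  then have "(z div 2 ^ H + 1) * 2 ^ H \<le> 2 ^ (n - H) * 2 ^ H" by (intro mult_le_mono1) simp
  then show ?thesis using n by simp
qed

lemma near_boundary_of_path:
  assumes x: "x div 2 ^ i = z div 2 ^ j" "i \<le> H" "j \<le> H" "(x \<in> D) \<noteq> (x div 2 ^ i \<in> D)" "x < N"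
    and low: "\<And>l. l \<le> i \<Longrightarrow> 2 \<le> x div 2 ^ l"
  shows "\<exists>u\<in>boundary N D. z \<in> near H u"
proof -
  obtain l where l: "l < i" "(x div 2 ^ l \<in> D) \<noteq> (x div 2 ^ l div 2 \<in> D)"
    using ancestor_path_change[of "\<lambda>v. v \<in> D" x i] x(4) by blast
  have "x div 2 ^ l < N" using x(5) div_le_dividend le_less_trans by blast
  moreover have "2 \<le> x div 2 ^ l" using low l(1) by simp
  ultimately have u: "x div 2 ^ l \<in> boundary N D \<or> x div 2 ^ l div 2 \<in> boundary N D"
    using boundary_of_parent_change l(2) by blast
  have "z div 2 ^ j = x div 2 ^ l div 2 ^ (i - l)" "z div 2 ^ j = x div 2 ^ l div 2 div 2 ^ (i - Suc l)"
    using x(1) l(1) div_exp_eq[of x l "i - l"] div_exp_eq[of "x div 2 ^ l" 1 "i - Suc l"]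
      div_exp_eq[of x l "Suc (i - Suc l)"] by simp_all
  then have "z \<in> near H (x div 2 ^ l)" "z \<in> near H (x div 2 ^ l div 2)"
    using x(2,3) nearI[of "i - l" H j z] nearI[of "i - Suc l" H j z] by auto
  then show ?thesis using u by blast
qed

text \<open>A node of \<open>D\<close> far from the root is near the boundary: either one of its \<open>H\<close> nearest
  ancestors leaves \<open>D\<close>, or its ancestor \<open>H\<close> levels up roots a subtree not contained in \<open>D\<close>; in both
  cases some tree edge on a short path crosses the boundary of \<open>D\<close>.\<close>
lemma near_boundary:
  assumes N: "N = 2 ^ n" and D: "D \<subseteq> {1..<N}"
    and no_full: "\<And>y. 1 \<le> y \<Longrightarrow> (y + 1) * 2 ^ H \<le> N \<Longrightarrow> \<not> subtree H y \<subseteq> D"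
    and z: "z \<in> D" "2 ^ (H + 1) \<le> z"
  shows "\<exists>u\<in>boundary N D. z \<in> near H u"
proof -
  have z_low: "2 \<le> z div 2 ^ l" if "l \<le> H" for l
  proof -
    have "(2::nat) ^ l \<le> 2 ^ H" using that by (rule power_increasing) simp
    moreover have "(2::nat) ^ (H + 1) = 2 * 2 ^ H" by simp
    ultimately have "2 * 2 ^ l \<le> z" using z(2) by linarith
    then show ?thesis by (simp add: less_eq_div_iff_mult_less_eq)
  qed
  have "z < N" using z(1) D by auto
  show ?thesis
  proof (cases "\<exists>i\<le>H. z div 2 ^ i \<notin> D")
    case True
    then obtain i where "i \<le> H" "z div 2 ^ i \<notin> D" by blast
    then show ?thesis using near_boundary_of_path[where x = z and i = i and j = i] z(1) z_low \<open>z < N\<close> by simp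
  next
    case False
    define y where "y = z div 2 ^ H"
    have "2 ^ H \<le> z" using z(2) by simp
    then have "(y + 1) * 2 ^ H \<le> N" using \<open>z < N\<close> ancestor_subtree_fits unfolding N y_def by blast
    moreover have "1 \<le> y" using z_low[of H] y_def by simp
    ultimately obtain w where w: "w \<in> subtree H y" "w \<notin> D" using no_full by blast
    then obtain i where i: "i \<le> H" "w div 2 ^ i = y" unfolding subtree_def by auto
    have "w < N" using subtree_bounds(2)[OF \<open>1 \<le> y\<close> \<open>(y + 1) * 2 ^ H \<le> N\<close> w(1)] .
    moreover have "2 \<le> w div 2 ^ l" if "l \<le> i" for l
      using z_low[of H] div_le_mono2[of "2 ^ l" "2 ^ i" w] power_increasing[OF that, of "2::nat"] i(2)
      unfolding y_def by simp
    moreover have "y \<in> D" using False y_def by blast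
    ultimately show ?thesis using near_boundary_of_path[where x = w and i = i and j = H] i w(2) y_def by simp
  qed
qed

lemma card_le_boundary:
  assumes N: "N = 2 ^ n" and D: "D \<subseteq> {1..<N}"
    and no_full: "\<And>y. 1 \<le> y \<Longrightarrow> (y + 1) * 2 ^ H \<le> N \<Longrightarrow> \<not> subtree H y \<subseteq> D"
  shows "card D \<le> card (boundary N D) * ((H + 1) * (H + 1) * 2 ^ H) + 2 ^ (H + 1)"
proof -
  let ?B = "boundary N D" and ?K = "(H + 1) * (H + 1) * 2 ^ H"
  have "?B \<subseteq> {1..<N}" using boundary_subset D by blast
  then have fin: "finite ?B" by (rule finite_subset) simp
  have near: "card (\<Union>u\<in>?B. near H u) \<le> card ?B * ?K"
  proof -
    have "card (\<Union>u\<in>?B. near H u) \<le> (\<Sum>u\<in>?B. card (near H u))" using card_UN_le[OF fin, of "near H"] .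
    also have "\<dots> \<le> (\<Sum>u\<in>?B. ?K)" by (rule sum_mono) (rule finite_card_near(2))
    also have "\<dots> = card ?B * ?K" by (simp only: sum_constant of_nat_id)
    finally show ?thesis .
  qed
  have "D \<subseteq> (\<Union>u\<in>?B. near H u) \<union> {..<2 ^ (H + 1)}"
  proof
    fix z assume "z \<in> D"
    then show "z \<in> (\<Union>u\<in>?B. near H u) \<union> {..<2 ^ (H + 1)}"
      using near_boundary[OF N D no_full \<open>z \<in> D\<close>] by (cases "z < 2 ^ (H + 1)") auto
  qed
  then have "card D \<le> card ((\<Union>u\<in>?B. near H u) \<union> {..<2 ^ (H + 1)})"
    using fin finite_card_near(1) by (intro card_mono) auto
  also have "\<dots> \<le> card (\<Union>u\<in>?B. near H u) + 2 ^ (H + 1)"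
    using card_Un_le[of "\<Union>u\<in>?B. near H u" "{..<2 ^ (H + 1)}"] by simp
  finally show ?thesis using near by linarith
qed

lemma boundary_matching:
  assumes D: "D \<subseteq> {1..<N}"
  obtains Q g where "Q \<subseteq> boundary N D" "inj_on g Q" "card (boundary N D) \<le> 3 * card Q"
    "\<And>u. u \<in> Q \<Longrightarrow> heap_near u (g u) \<and> 1 \<le> g u \<and> g u < N \<and> g u \<notin> D"
proof -
  let ?B = "boundary N D"
  define child where "child u = (if 2 * u < N \<and> 2 * u \<notin> D then 2 * u else 2 * u + 1)" for u
  define Bc where "Bc = {u \<in> ?B. (2 * u < N \<and> 2 * u \<notin> D) \<or> (2 * u + 1 < N \<and> 2 * u + 1 \<notin> D)}"
  define Bp where "Bp p = {u \<in> ?B. 2 \<le> u \<and> u div 2 \<notin> D \<and> even u = p}" for p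
  have "?B \<subseteq> {1..<N}" using D boundary_subset by blast
  then have "finite ?B" by (rule finite_subset) simp
  then have "finite Bc" "finite (Bp p)" for p unfolding Bc_def Bp_def by auto
  moreover have "?B = Bc \<union> Bp True \<union> Bp False" unfolding Bc_def Bp_def boundary_def by auto
  ultimately have "card ?B \<le> card Bc + card (Bp True) + card (Bp False)"
    by (metis card_Un_le add_le_mono1 order_trans)
  then have "card ?B \<le> 3 * card Bc \<or> card ?B \<le> 3 * card (Bp True) \<or> card ?B \<le> 3 * card (Bp False)"
    by linarith
  then consider "card ?B \<le> 3 * card Bc" | p where "card ?B \<le> 3 * card (Bp p)" by blast
  then show thesis
  proof cases
    case 1
    have "child u div 2 = u" for u unfolding child_def by auto
    then have "inj_on child Bc" by (metis inj_onI)
    moreover have "heap_near u (child u) \<and> 1 \<le> child u \<and> child u < N \<and> child u \<notin> D" if "u \<in> Bc" for u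
      using that \<open>?B \<subseteq> {1..<N}\<close> unfolding Bc_def child_def heap_near_def by auto
    moreover have "Bc \<subseteq> ?B" unfolding Bc_def by auto
    ultimately show thesis using that 1 by blast
  next
    case (2 p)
    have "inj_on (\<lambda>u. u div 2) (Bp p)"
    proof (rule inj_onI)
      fix x y assume "x \<in> Bp p" "y \<in> Bp p" "x div 2 = y div 2"
      then have "even x = even y" unfolding Bp_def by simp
      with \<open>x div 2 = y div 2\<close> show "x = y" by (metis odd_two_times_div_two_succ even_two_times_div_two)
    qed
    moreover have "heap_near u (u div 2) \<and> 1 \<le> u div 2 \<and> u div 2 < N \<and> u div 2 \<notin> D" if "u \<in> Bp p" for u
      using that \<open>?B \<subseteq> {1..<N}\<close> unfolding Bp_def heap_near_def by auto
    moreover have "Bp p \<subseteq> ?B" unfolding Bp_def by auto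
    ultimately show thesis using that 2 by blast
  qed
qed

text \<open>Arithmetic behind the last case of the main estimate, with \<open>P = 2 ^ H > b\<close>: heavy nodes
  carrying two thirds of \<open>m \<ge> P ^ 8\<close> vertices number more than \<open>2 P ^ 8 / (3 b) > P ^ 6\<close>, whereas
  with fewer than \<open>H\<close> boundary nodes the boundary count allows at most \<open>P ^ 4 + 2 P\<close>.\<close>
lemma boundary_large:
  fixes b H m d \<beta> :: nat
  assumes d: "d \<le> \<beta> * ((H + 1) * (H + 1) * 2 ^ H) + 2 ^ (H + 1)"
    and b: "b < 2 ^ H" and H: "3 \<le> H" and m: "2 ^ (8 * H) \<le> m" and dense: "2 * m < 3 * (b * d)"
  shows "H \<le> \<beta>"
proof (rule ccontr)
  assume "\<not> H \<le> \<beta>"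
  define P :: nat where "P = 2 ^ H"
  have "H < P" unfolding P_def by (rule less_exp)
  then have \<beta>: "\<beta> \<le> P" using \<open>\<not> H \<le> \<beta>\<close> by linarith
  have "(2::nat) ^ 3 \<le> 2 ^ H" using H by (rule power_increasing) simp
  then have P8: "8 \<le> P" unfolding P_def by simp
  have "H + 1 \<le> P" using \<open>H < P\<close> by simp
  then have "(H + 1) * (H + 1) * 2 ^ H \<le> P * P * P" unfolding P_def by (intro mult_le_mono) auto
  with \<beta> have "\<beta> * ((H + 1) * (H + 1) * 2 ^ H) \<le> P * (P * P * P)" by (rule mult_le_mono)
  moreover have "(2::nat) ^ (H + 1) = 2 * P" unfolding P_def by simp
  ultimately have "d \<le> P * (P * P * P) + 2 * P" using d by linarith
  then have "b * d \<le> P * (P * (P * P * P) + 2 * P)" using b unfolding P_def by (intro mult_le_mono) auto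
  also have "\<dots> = P ^ 5 + 2 * P ^ 2" by (simp add: algebra_simps eval_nat_numeral)
  also have "\<dots> \<le> 3 * P ^ 5"
  proof -
    have "P ^ 2 \<le> P ^ 5" using P8 by (intro power_increasing) auto
    then show ?thesis by linarith
  qed
  finally have "3 * (b * d) \<le> 9 * P ^ 5" by simp
  also have "\<dots> < 2 * P ^ 8"
  proof -
    have "(8::nat) ^ 3 \<le> P ^ 3" using P8 by (rule power_mono) simp
    then have "9 < 2 * P ^ 3" by simp
    then have "9 * P ^ 5 < 2 * P ^ 3 * P ^ 5" using P8 by (intro mult_strict_right_mono) auto
    also have "\<dots> = 2 * P ^ 8" by (simp add: mult.assoc flip: power_add)
    finally show ?thesis .
  qed
  also have "\<dots> \<le> 2 * m" using m unfolding P_def by (simp add: mult.commute flip: power_mult)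
  finally show False using dense by simp
qed

lemma half_bounds: "2 \<le> b \<Longrightarrow> b \<le> 3 * (b div 2)" "3 \<le> H \<Longrightarrow> H \<le> 8 * ((H - 1) div 2)"
  for b H :: nat by presburger+

lemma heavy_subtree_bound:
  assumes b: "2 \<le> b" and H: "3 \<le> H" and y: "1 \<le> y" "(y + 1) * 2 ^ H \<le> N"
    and heavy: "\<forall>z\<in>subtree H y. heavy b vs (length vs) z"
  shows "\<exists>j\<le>length vs. \<exists>A f. crossing_pairing (blowup b N) (set (take j vs)) A f \<and> b * H \<le> 24 * card A"
proof -
  obtain j A f where "j \<le> length vs" "crossing_pairing (blowup b N) (set (take j vs)) A f"
      and A: "(b div 2) * ((H - 1) div 2) \<le> card A"
    using subtree_pairing[OF b _ y heavy] H by auto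
  moreover have "b * H \<le> (3 * (b div 2)) * (8 * ((H - 1) div 2))"
    using half_bounds b H by (intro mult_le_mono)
  then have "b * H \<le> 24 * card A" using A by linarith
  ultimately show ?thesis by blast
qed

lemma light_blobs_bound:
  assumes b: "0 < b" "b < 2 ^ H" and m: "2 ^ (8 * H) \<le> card (set vs)"
    and light: "card (set vs) \<le> 3 * (\<Sum>x\<in>L. card (blob b x \<inter> set vs))"
    and L: "L \<subseteq> {1..<N}" "\<And>x. x \<in> L \<Longrightarrow> \<not> heavy b vs (length vs) x"
  shows "\<exists>A f. crossing_pairing (blowup b N) (set vs) A f \<and> b * H \<le> 24 * card A"
proof -
  obtain A f where A: "crossing_pairing (blowup b N) (set vs) A f"
      "card A = (\<Sum>x\<in>L. card (blob b x \<inter> set vs))"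
    using light_blobs_pairing[OF b(1) finite_subset[OF L(1)], of N "set vs"] L
    unfolding heavy_def by fastforce
  have "H < 2 ^ H" by (rule less_exp)
  then have "b * H \<le> 2 ^ H * 2 ^ H" using b(2) by (intro mult_le_mono) auto
  also have "\<dots> \<le> 2 ^ (8 * H)" by (simp flip: power_add)
  finally show ?thesis using A m light by auto
qed

lemma heavy_boundary_bound:
  assumes b: "2 \<le> b" and D: "D = {x \<in> {1..<N}. heavy b vs (length vs) x}"
    and many: "H \<le> card (boundary N D)"
  shows "\<exists>A f. crossing_pairing (blowup b N) (set vs) A f \<and> b * H \<le> 24 * card A"
proof -
  have "D \<subseteq> {1..<N}" using D by blast
  obtain Q g where Q: "Q \<subseteq> boundary N D" "inj_on g Q" "card (boundary N D) \<le> 3 * card Q"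
      and g: "\<And>u. u \<in> Q \<Longrightarrow> heap_near u (g u) \<and> 1 \<le> g u \<and> g u < N \<and> g u \<notin> D"
    using boundary_matching[OF \<open>D \<subseteq> {1..<N}\<close>] by blast
  have "Q \<subseteq> {1..<N}" using Q(1) boundary_subset \<open>D \<subseteq> {1..<N}\<close> by blast
  then have "finite Q" by (rule finite_subset) simp
  have "1 \<le> u \<and> u < N \<and> b < 2 * card (blob b u \<inter> set vs)" if "u \<in> Q" for u
    using that Q(1) boundary_subset unfolding D heavy_def by auto
  moreover have "heap_near u (g u) \<and> 1 \<le> g u \<and> g u < N \<and> 2 * card (blob b (g u) \<inter> set vs) \<le> b"
    if "u \<in> Q" for u
    using g[OF that] unfolding D heavy_def by auto
  ultimately obtain A f where A: "crossing_pairing (blowup b N) (set vs) A f" "card A = card Q * (b div 2)"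
    using heavy_light_pairing[OF _ \<open>finite Q\<close> Q(2), of b N "set vs"] b by auto
  have "b * H \<le> (3 * (b div 2)) * (3 * card Q)"
    using half_bounds(1)[OF b] many Q(3) by (intro mult_le_mono) auto
  then have "b * H \<le> 24 * card A" using A(2) by (simp add: mult.commute)
  then show ?thesis using A(1) by blast
qed

lemma ordering_pairing_bound:
  assumes b: "2 \<le> b" and N: "N = 2 ^ n" and V: "set vs \<subseteq> blowup_verts b N"
    and m: "2 ^ (8 * H) \<le> card (set vs)" and bH: "b < 2 ^ H" and H: "3 \<le> H"
  shows "\<exists>j\<le>length vs. \<exists>A f. crossing_pairing (blowup b N) (set (take j vs)) A f \<and> b * H \<le> 24 * card A"
proof -
  define D where "D = {x \<in> {1..<N}. heavy b vs (length vs) x}"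
  define light where "light = (\<Sum>x\<in>{1..<N} - D. card (blob b x \<inter> set vs))"
  have take_all: "set (take (length vs) vs) = set vs" by simp
  have "D \<subseteq> {1..<N}" unfolding D_def by blast
  show ?thesis
  proof (cases "\<exists>y. 1 \<le> y \<and> (y + 1) * 2 ^ H \<le> N \<and> subtree H y \<subseteq> D")
    case True
    then show ?thesis using heavy_subtree_bound[OF b H] unfolding D_def by blast
  next
    case False
    have blob_le: "card (blob b x \<inter> set vs) \<le> b" for x
      using card_mono[of "blob b x" "blob b x \<inter> set vs"] b by simp
    have "card (set vs) = (\<Sum>x\<in>{1..<N}. card (blob b x \<inter> set vs))"
      using card_eq_sum_blob_Int[OF _ V] b by simp
    also have "\<dots> = light + (\<Sum>x\<in>D. card (blob b x \<inter> set vs))"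
      unfolding light_def using sum.subset_diff[OF \<open>D \<subseteq> {1..<N}\<close>] by simp
    also have "(\<Sum>x\<in>D. card (blob b x \<inter> set vs)) \<le> b * card D"
      using sum_mono[of D "\<lambda>x. card (blob b x \<inter> set vs)" "\<lambda>_. b"] blob_le
      by (simp add: mult.commute)
    finally have split: "card (set vs) \<le> light + b * card D" by simp
    show ?thesis
    proof (cases "card (set vs) \<le> 3 * light")
      case True
      have "\<exists>A f. crossing_pairing (blowup b N) (set vs) A f \<and> b * H \<le> 24 * card A"
        by (rule light_blobs_bound[OF _ bH m True[unfolded light_def]]) (use b in \<open>auto simp: D_def\<close>)
      then show ?thesis by (intro exI[of _ "length vs"]) simp
    next
      case False
      then have "2 * card (set vs) < 3 * (b * card D)" using split by linarith
      with \<open>D \<subseteq> {1..<N}\<close> have "H \<le> card (boundary N D)"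
        using boundary_large[OF card_le_boundary[OF N] bH H m] \<open>\<not> (\<exists>y. _)\<close> by blast
      then have "\<exists>A f. crossing_pairing (blowup b N) (set vs) A f \<and> b * H \<le> 24 * card A"
        by (rule heavy_boundary_bound[OF b D_def])
      then show ?thesis by (intro exI[of _ "length vs"]) simp
    qed
  qed
qed

lemma exists_octave:
  fixes m :: nat
  assumes "1 \<le> m"
  obtains H where "2 ^ (8 * H) \<le> m" "m < 2 ^ (8 * H + 8)"
proof -
  obtain H where "(2 ^ 8) ^ H \<le> m" "m < (2 ^ 8) ^ (H + 1)"
    using ex_power_ivl1[of "2 ^ 8" m] assms by auto
  moreover have "(2::nat) ^ (8 * H) = (2 ^ 8) ^ H" by (rule power_mult)
  moreover have "(2::nat) ^ (8 * H + 8) = (2 ^ 8) ^ (H + 1)"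
    using power_mult[of "2::nat" 8 "H + 1"] by (simp add: add.commute)
  ultimately show thesis using that[of H] by simp
qed

lemma pmw_blowup_ge:
  assumes b: "2 \<le> b" "b < 2 ^ H" and H: "3 \<le> H"
    and V: "V \<subseteq> blowup_verts b (2 ^ n)" "2 ^ (8 * H) \<le> card V"
  shows "b * H \<le> 24 * pmw (blowup b (2 ^ n)) V"
proof -
  define w where "w = (b * H + 23) div 24"
  have "w \<le> pmw (blowup b (2 ^ n)) V"
  proof (rule pmw_geI[OF simple_graph_blowup finite_subset[OF V(1) finite_blowup_verts]])
    fix vs assume "distinct vs" "set vs = V"
    then have "set vs \<subseteq> blowup_verts b (2 ^ n)" "2 ^ (8 * H) \<le> card (set vs)" using V by auto
    then obtain j A f where "j \<le> length vs"
        "crossing_pairing (blowup b (2 ^ n)) (set (take j vs)) A f" "b * H \<le> 24 * card A"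
      using ordering_pairing_bound[OF b(1) refl _ _ b(2) H] by blast
    moreover have "w \<le> card A" using calculation(3) unfolding w_def by linarith
    ultimately show "\<exists>j\<le>length vs. \<exists>A f. crossing_pairing (blowup b (2 ^ n)) (set (take j vs)) A f
      \<and> w \<le> card A" by blast
  qed
  moreover have "b * H \<le> 24 * w" unfolding w_def by presburger
  ultimately show ?thesis by linarith
qed

lemma pmw_blowup_lower_bound:
  assumes b: "128 \<le> b" and V: "V \<subseteq> blowup_verts b (2 ^ n)" and m: "(2 * b) ^ 8 \<le> card V"
  shows "real (2 * b) * log 2 (real (card V)) / 432 \<le> real (pmw (blowup b (2 ^ n)) V)"
proof -
  have "(2::nat) ^ 64 = (2 ^ 8) ^ 8" by simp
  also have "\<dots> \<le> (2 * b) ^ 8" using b by (intro power_mono) auto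
  finally have m64: "2 ^ 64 \<le> card V" using m by linarith
  then obtain H where H: "2 ^ (8 * H) \<le> card V" "card V < 2 ^ (8 * H + 8)"
    using exists_octave[of "card V"] by (metis le_trans one_le_numeral one_le_power)
  have "(2::nat) ^ 64 < 2 ^ (8 * H + 8)" using m64 H(2) by linarith
  then have "64 < 8 * H + 8" by (rule power_less_imp_less_exp[rotated]) simp
  then have "8 \<le> H" by simp
  have "8 * H + 8 = (H + 1) * 8" by simp
  then have "(2::nat) ^ (8 * H + 8) = (2 ^ (H + 1)) ^ 8" by (simp only: power_mult)
  then have "(2 * b) ^ 8 < (2 ^ (H + 1)) ^ 8" using m H(2) by linarith
  then have "2 * b < 2 ^ (H + 1)" by (rule power_less_imp_less_base) simp
  then have "b * H \<le> 24 * pmw (blowup b (2 ^ n)) V"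
    using pmw_blowup_ge[OF _ _ _ V H(1)] b \<open>8 \<le> H\<close> by simp
  then have pmw: "real b * real H \<le> 24 * real (pmw (blowup b (2 ^ n)) V)"
    by (metis of_nat_le_iff of_nat_mult of_nat_numeral)
  have "real (card V) < 2 ^ (8 * H + 8)"
    using H(2) by (metis of_nat_less_iff of_nat_numeral of_nat_power)
  moreover have "0 < real (card V)" using m64 by simp
  ultimately have "log 2 (real (card V)) < log 2 (2 ^ (8 * H + 8))" by (intro log_less) auto
  then have "log 2 (real (card V)) \<le> 9 * real H" using \<open>8 \<le> H\<close> by simp
  then have "real (2 * b) * log 2 (real (card V)) / 432 \<le> real (2 * b) * (9 * real H) / 432"
    by (intro divide_right_mono mult_left_mono) auto
  also have "\<dots> = real b * real H / 24" by simp
  finally show ?thesis using pmw by simp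
qed

lemma blowup_family:
  assumes "even k" "256 \<le> k"
  shows "\<exists>\<G> :: graph set.
         (\<forall>n. \<exists>G\<in>\<G>. card (verts G) \<ge> n) \<and>
         (\<forall>G\<in>\<G>. simple_graph G \<and> treewidth G \<le> k) \<and>
         (\<forall>G\<in>\<G>. \<forall>V. V \<subseteq> verts G \<and> real (card V) \<ge> real k powr 8 \<longrightarrow>
              real (pmw G V) \<ge> real k * log 2 (real (card V)) / 432)"
proof -
  obtain b where k: "k = 2 * b" using \<open>even k\<close> by blast
  with \<open>256 \<le> k\<close> have b: "128 \<le> b" by simp
  let ?G = "range (\<lambda>n. blowup b (2 ^ Suc n))"
  have "\<exists>G\<in>?G. n \<le> card (verts G)" for n
  proof -
    have "n < 2 ^ n" "2 ^ Suc n = 2 * (2::nat) ^ n" by (simp_all add: less_exp)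
    then have "n \<le> 2 ^ Suc n - 1" by linarith
    also have "\<dots> \<le> (2 ^ Suc n - 1) * b" using b by simp
    also have "\<dots> = card (verts (blowup b (2 ^ Suc n)))" by (simp add: card_blowup_verts diff_mult_distrib)
    finally show ?thesis by blast
  qed
  moreover have "simple_graph G \<and> treewidth G \<le> k" if "G \<in> ?G" for G
  proof -
    from that obtain n where G: "G = blowup b (2 ^ Suc n)" by blast
    have "treewidth G \<le> 2 * b - 1" unfolding G using b by (intro treewidth_blowup) auto
    then show ?thesis using simple_graph_blowup unfolding G k by auto
  qed
  moreover have "real k * log 2 (real (card V)) / 432 \<le> real (pmw G V)"
    if "G \<in> ?G" "V \<subseteq> verts G" "real k powr 8 \<le> real (card V)" for G V
  proof -
    from that(1) obtain n where G: "G = blowup b (2 ^ Suc n)" by blast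
    have "real k powr 8 = real (k ^ 8)" using powr_realpow[of "real k" 8] b k by simp
    then have "real (k ^ 8) \<le> real (card V)" using that(3) by linarith
    then have "(2 * b) ^ 8 \<le> card V" unfolding k of_nat_le_iff .
    then show ?thesis using pmw_blowup_lower_bound[OF b, of V "Suc n"] that(2) G k by simp
  qed
  ultimately show ?thesis by (intro exI[of _ ?G]) blast
qed

theorem theorem2:
  shows "\<exists>c0 c1 c2 :: real. c0 \<ge> 1 \<and> c1 \<ge> 1 \<and> c2 \<ge> 1 \<and>
    (\<exists>K :: nat set. infinite K \<and> (\<forall>k\<in>K. real k \<ge> c0) \<and>
      (\<forall>k\<in>K. \<exists>\<G> :: graph set.
         (\<forall>n. \<exists>G\<in>\<G>. card (verts G) \<ge> n) \<and>
         (\<forall>G\<in>\<G>. simple_graph G \<and> treewidth G \<le> k) \<and>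
         (\<forall>G\<in>\<G>. \<forall>V. V \<subseteq> verts G \<and> real (card V) \<ge> real k powr c1 \<longrightarrow>
              real (pmw G V) \<ge> real k * log 2 (real (card V)) / c2)))"
proof (rule exI[of _ 256], rule exI[of _ 8], rule exI[of _ 432],
    intro conjI exI[of _ "{k. even k \<and> 256 \<le> k}"])
  show "infinite {k :: nat. even k \<and> 256 \<le> k}"
    unfolding infinite_nat_iff_unbounded_le
  proof
    fix m :: nat show "\<exists>n\<ge>m. n \<in> {k. even k \<and> 256 \<le> k}" by (intro exI[of _ "2 * m + 256"]) auto
  qed
qed ((rule ballI, rule blowup_family) | simp)+

end
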